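(* Let $e^m_1,e^m_2,e^m_3$ and $e^g_1,e^g_2,e^g_3$ be Bernoulli random variables on a common probability space. For $i\in\{1,2,3\}$, $e^m_i$ indicates that sub-system $i$ makes a safety-critical miss and $e^g_i$ indicates that it makes a safety-critical ghost. Let $e^m$ be the event that at least two of $e^m_1,e^m_2,e^m_3$ occur, and let $e^g$ be the event that at least two of $e^g_1,e^g_2,e^g_3$ occur. These are the miss and ghost events of the majority-vote fusion system. Let $c>0$ and $p\ge 0$. Assume: - for every pair $i\neq j$, the variables $e^m_i,e^m_j$ are one-sided $c$-approximate independent, and so are $e^g_i,e^g_j$; - for every $i$, $\Pr[e^m_i]\le p$ and $\Pr[e^g_i]\le p$. Then \[ \Pr[e^m \lor e^g] \le 6\,c\,p^2 . \]
   Context: Two Bernoulli random variables $r_1,r_2$ are called one-sided $c$-approximate independent if $\Pr[r_1 \land r_2] \le c\,\Pr[r_1]\,\Pr[r_2]$. *)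

theory Defs
  imports "HOL-Probability.Probability"
begin

text \<open>A Bernoulli random variable is represented by the event on which it equals 1.
  One-sided c-approximate independence: Pr[r1 and r2] <= c Pr[r1] Pr[r2].\<close>
definition one_sided_approx_indep :: "'a measure \<Rightarrow> real \<Rightarrow> 'a set \<Rightarrow> 'a set \<Rightarrow> bool" where
  "one_sided_approx_indep M c A B \<longleftrightarrow>
     measure M (A \<inter> B) \<le> c * measure M A * measure M B"

definition at_least_two_of_three :: "'a measure \<Rightarrow> (nat \<Rightarrow> 'a set) \<Rightarrow> 'a set" where
  "at_least_two_of_three M E = {x \<in> space M. 2 \<le> card {i \<in> {1,2,3::nat}. x \<in> E i}}"

end

theory Submission
  imports Defs
begin

text \<open>The majority event is the union of the three pairwise intersections, so by the union
  bound and approximate independence it has probability at most 3 c p^2; a second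
  union bound over the miss and ghost events gives 6 c p^2.\<close>

lemma at_least_two_of_three_eq:
  "at_least_two_of_three M E = space M \<inter> (E 1 \<inter> E 2 \<union> E 1 \<inter> E 3 \<union> E 2 \<inter> E 3)"
proof -
  have "{i \<in> {1,2,3::nat}. x \<in> E i} =
      (if x \<in> E 1 then {1} else {}) \<union> (if x \<in> E 2 then {2} else {}) \<union> (if x \<in> E 3 then {3} else {})"
    for x by auto
  then show ?thesis
    unfolding at_least_two_of_three_def by (auto split: if_splits)
qed

lemma sets_at_least_two_of_three:
  assumes "\<And>i. i \<in> {1,2,3} \<Longrightarrow> E i \<in> sets M"
  shows "at_least_two_of_three M E \<in> sets M"
  unfolding at_least_two_of_three_eq using assms by auto

context prob_space
begin

lemma prob_inter_le_of_approx_indep: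
  assumes "one_sided_approx_indep M c A B" "c \<ge> 0"
    and "prob A \<le> p" "prob B \<le> q"
  shows "prob (A \<inter> B) \<le> c * p * q"
proof -
  have "prob (A \<inter> B) \<le> c * prob A * prob B"
    using assms(1) unfolding one_sided_approx_indep_def .
  also have "\<dots> \<le> c * p * q"
  proof (intro mult_mono mult_left_mono)
    show "0 \<le> c * p"
      using assms(2,3) by (simp add: order_trans[OF measure_nonneg])
  qed (use assms(2-4) in auto)
  finally show ?thesis .
qed

lemma prob_at_least_two_of_three_le:
  assumes sets: "\<And>i. i \<in> {1,2,3} \<Longrightarrow> E i \<in> events" and "c \<ge> 0"
    and indep: "\<And>i j. i \<in> {1,2,3} \<Longrightarrow> j \<in> {1,2,3} \<Longrightarrow> i \<noteq> j \<Longrightarrow>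
           one_sided_approx_indep M c (E i) (E j)"
    and bound: "\<And>i. i \<in> {1,2,3} \<Longrightarrow> prob (E i) \<le> p"
  shows "prob (at_least_two_of_three M E) \<le> 3 * c * p\<^sup>2"
proof -
  have pair: "prob (E i \<inter> E j) \<le> c * p\<^sup>2" if "i \<in> {1,2,3}" "j \<in> {1,2,3}" "i \<noteq> j" for i j
    using prob_inter_le_of_approx_indep[OF indep[OF that] \<open>c \<ge> 0\<close> bound bound] that
    by (simp add: power2_eq_square mult.assoc)
  have "E i \<subseteq> space M" if "i \<in> {1,2,3}" for i
    using sets[OF that] sets.sets_into_space by blast
  then have "at_least_two_of_three M E = E 1 \<inter> E 2 \<union> E 1 \<inter> E 3 \<union> E 2 \<inter> E 3"
    unfolding at_least_two_of_three_eq by auto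
  also have "prob \<dots> \<le> prob (E 1 \<inter> E 2 \<union> E 1 \<inter> E 3) + prob (E 2 \<inter> E 3)"
    using sets by (intro measure_subadditive) auto
  also have "\<dots> \<le> prob (E 1 \<inter> E 2) + prob (E 1 \<inter> E 3) + prob (E 2 \<inter> E 3)"
    using sets by (intro add_right_mono measure_subadditive) auto
  also have "\<dots> \<le> 3 * c * p\<^sup>2"
    using pair[of 1 2] pair[of 1 3] pair[of 2 3] by simp
  finally show ?thesis .
qed

end

theorem corollary3:
  fixes M :: "'a measure" and em eg :: "nat \<Rightarrow> 'a set" and c p :: real
  assumes "prob_space M"
    and "\<And>i. i \<in> {1,2,3} \<Longrightarrow> em i \<in> sets M"
    and "\<And>i. i \<in> {1,2,3} \<Longrightarrow> eg i \<in> sets M"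
    and "c > 0" and "p \<ge> 0"
    and "\<And>i j. i \<in> {1,2,3} \<Longrightarrow> j \<in> {1,2,3} \<Longrightarrow> i \<noteq> j \<Longrightarrow>
           one_sided_approx_indep M c (em i) (em j)"
    and "\<And>i j. i \<in> {1,2,3} \<Longrightarrow> j \<in> {1,2,3} \<Longrightarrow> i \<noteq> j \<Longrightarrow>
           one_sided_approx_indep M c (eg i) (eg j)"
    and "\<And>i. i \<in> {1,2,3} \<Longrightarrow> measure M (em i) \<le> p"
    and "\<And>i. i \<in> {1,2,3} \<Longrightarrow> measure M (eg i) \<le> p"
  shows "measure M (at_least_two_of_three M em \<union> at_least_two_of_three M eg) \<le> 6 * c * p\<^sup>2"
proof -
  interpret prob_space M by fact
  have "prob (at_least_two_of_three M em \<union> at_least_two_of_three M eg)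
      \<le> prob (at_least_two_of_three M em) + prob (at_least_two_of_three M eg)"
    using assms(2,3) by (intro measure_subadditive sets_at_least_two_of_three) auto
  also have "\<dots> \<le> 3 * c * p\<^sup>2 + 3 * c * p\<^sup>2"
    using assms(2-9) by (intro add_mono prob_at_least_two_of_three_le) auto
  finally show ?thesis by simp
qed

end
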